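(* Fix $\beta>1$. Let $(D_n)_{n\geq1}$ be a sequence of non-empty finite sets of generalised $\beta$-digits, and suppose that both the lengths and the subdigits of all generalised digits appearing in the sets $D_n$ are bounded. Identifying each generalised digit with its value, let $\ell_n$ and $u_n$ be the least and greatest elements of $D_n$, $\Delta_n=u_n-\ell_n$, and let $\delta_n$ be the largest gap between consecutive elements of $D_n$ (with $\delta_n=0$ if $|D_n|=1$). If for every $n\geq1$ $$\delta_n\leq\sum_{i=1}^{\infty}\Delta_{n+i}\,\beta^{-i},$$ then $$\Big\{\sum_{n=1}^\infty a_n\beta^{-n} : a_n\in D_n \text{ for all } n\Big\}=\Big[\sum_{n=1}^\infty \ell_n\beta^{-n},\ \sum_{n=1}^\infty u_n\beta^{-n}\Big].$$
   Context: A generalised $\beta$-digit of length $k+1$ is a string $c_0.c_1\ldots c_k$ of non-negative integers $c_0,\dots,c_k$ (its subdigits); its value is $\sum_{i=0}^k c_i\beta^{-i}$, which depends on $\beta$. Least/greatest elements and gaps are taken with respect to these values. *)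

theory Defs
  imports Complex_Main
begin

text \<open>A generalised beta-digit c_0.c_1...c_k is a non-empty list [c_0,...,c_k] of naturals.\<close>

definition gdigit_val :: "real \<Rightarrow> nat list \<Rightarrow> real" where
  "gdigit_val \<beta> c = (\<Sum>i<length c. real (c ! i) * \<beta> powr (- real i))"

definition digit_vals :: "real \<Rightarrow> nat list set \<Rightarrow> real set" where
  "digit_vals \<beta> D = gdigit_val \<beta> ` D"

definition dmin :: "real \<Rightarrow> nat list set \<Rightarrow> real" where
  "dmin \<beta> D = Min (digit_vals \<beta> D)"

definition dmax :: "real \<Rightarrow> nat list set \<Rightarrow> real" where
  "dmax \<beta> D = Max (digit_vals \<beta> D)"

definition dspread :: "real \<Rightarrow> nat list set \<Rightarrow> real" where
  "dspread \<beta> D = dmax \<beta> D - dmin \<beta> D"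

definition dgap :: "real \<Rightarrow> nat list set \<Rightarrow> real" where
  "dgap \<beta> D = Max (insert 0 {y - x | x y. x \<in> digit_vals \<beta> D \<and> y \<in> digit_vals \<beta> D \<and> x < y \<and>
       \<not> (\<exists>z \<in> digit_vals \<beta> D. x < z \<and> z < y)})"

end

theory Submission
  imports Defs
begin

text \<open>With \<open>r = 1/\<beta>\<close>, write \<open>T\<^sub>n(f) = \<Sum>\<^sub>i f(n+1+i) r\<^sup>i\<^sup>+\<^sup>1\<close> for the tails of the expansions.
  Expansions with digits in \<open>D\<^sub>n\<close> lie between \<open>T\<^sub>0(\<ell>)\<close> and \<open>T\<^sub>0(u)\<close> by monotonicity. Conversely,
  a point \<open>x \<in> [T\<^sub>n(\<ell>), T\<^sub>n(u)]\<close> can be expanded greedily: since \<open>T\<^sub>n(f) = r (f(n+1) + T\<^sub>n\<^sub>+\<^sub>1(f))\<close>,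
  one needs a digit \<open>d \<in> D\<^sub>n\<^sub>+\<^sub>1\<close> with \<open>x/r - d \<in> [T\<^sub>n\<^sub>+\<^sub>1(\<ell>), T\<^sub>n\<^sub>+\<^sub>1(u)]\<close>, and such a digit exists
  because the windows \<open>[d + T\<^sub>n\<^sub>+\<^sub>1(\<ell>), d + T\<^sub>n\<^sub>+\<^sub>1(u)]\<close> cover \<open>[\<ell> + T\<^sub>n\<^sub>+\<^sub>1(\<ell>), u + T\<^sub>n\<^sub>+\<^sub>1(u)]\<close>
  as soon as no gap of \<open>D\<^sub>n\<^sub>+\<^sub>1\<close> exceeds \<open>T\<^sub>n\<^sub>+\<^sub>1(u) - T\<^sub>n\<^sub>+\<^sub>1(\<ell>) = T\<^sub>n\<^sub>+\<^sub>1(u - \<ell>)\<close>.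
  The remainders of the greedy algorithm stay bounded, so the partial expansions converge to \<open>x\<close>.\<close>

definition tail_sum :: "real \<Rightarrow> (nat \<Rightarrow> real) \<Rightarrow> nat \<Rightarrow> real" where
  "tail_sum r f n = (\<Sum>i. f (n + Suc i) * r ^ Suc i)"

lemma tail_sum_cong:
  assumes "\<And>k. k \<ge> 1 \<Longrightarrow> f k = g k"
  shows "tail_sum r f n = tail_sum r g n"
  unfolding tail_sum_def using assms by simp

context
  fixes r B :: real and f :: "nat \<Rightarrow> real"
  assumes r: "0 < r" "r < 1"
    and bdd: "\<And>k. k \<ge> 1 \<Longrightarrow> \<bar>f k\<bar> \<le> B"
begin

lemma tail_term_le_geometric: "\<bar>f (n + Suc i) * r ^ Suc i\<bar> \<le> B * r * r ^ i"
proof -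
  have "\<bar>f (n + Suc i)\<bar> * r ^ Suc i \<le> B * r ^ Suc i"
    using bdd r by (intro mult_right_mono) auto
  thus ?thesis using r by (simp add: abs_mult)
qed

lemma summable_tail_terms: "summable (\<lambda>i. f (n + Suc i) * r ^ Suc i)"
  using r tail_term_le_geometric
  by (intro summable_comparison_test[OF _ summable_mult[OF summable_geometric]]) auto

lemma tail_sum_unfold: "tail_sum r f n = r * (f (Suc n) + tail_sum r f (Suc n))"
proof -
  have "tail_sum r f n = f (Suc n) * r + (\<Sum>i. f (n + Suc (Suc i)) * r ^ Suc (Suc i))"
    unfolding tail_sum_def using suminf_split_head[OF summable_tail_terms] by simp
  also have "(\<Sum>i. f (n + Suc (Suc i)) * r ^ Suc (Suc i)) = r * tail_sum r f (Suc n)"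
    unfolding tail_sum_def using suminf_mult[OF summable_tail_terms[of "Suc n"], of r]
    by (simp add: algebra_simps)
  finally show ?thesis by (simp add: algebra_simps)
qed

lemma abs_tail_sum_le: "\<bar>tail_sum r f n\<bar> \<le> B * r / (1 - r)"
proof -
  have geom: "summable (\<lambda>i. B * r * r ^ i)"
    using r by (intro summable_mult summable_geometric) simp
  have abs_terms: "summable (\<lambda>i. \<bar>f (n + Suc i) * r ^ Suc i\<bar>)"
    using tail_term_le_geometric by (intro summable_comparison_test[OF _ geom]) auto
  have "\<bar>tail_sum r f n\<bar> \<le> (\<Sum>i. \<bar>f (n + Suc i) * r ^ Suc i\<bar>)"
    unfolding tail_sum_def using summable_rabs[OF abs_terms] by simp
  also have "\<dots> \<le> (\<Sum>i. B * r * r ^ i)"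
    using tail_term_le_geometric by (intro suminf_le abs_terms geom) auto
  also have "\<dots> = B * r / (1 - r)"
    using r suminf_mult[OF summable_geometric[of r], of "B * r"] suminf_geometric[of r] by simp
  finally show ?thesis .
qed

end

lemma tail_sum_diff:
  assumes "0 < r" "r < 1" "\<And>k. k \<ge> 1 \<Longrightarrow> \<bar>f k\<bar> \<le> B" "\<And>k. k \<ge> 1 \<Longrightarrow> \<bar>g k\<bar> \<le> B"
  shows "tail_sum r g n - tail_sum r f n = tail_sum r (\<lambda>k. g k - f k) n"
  unfolding tail_sum_def
  using suminf_diff[OF summable_tail_terms[OF assms(1,2,4)] summable_tail_terms[OF assms(1,2,3)]]
  by (simp add: left_diff_distrib)

lemma tail_sum_mono:
  assumes "0 < r" "r < 1" "\<And>k. k \<ge> 1 \<Longrightarrow> \<bar>f k\<bar> \<le> B" "\<And>k. k \<ge> 1 \<Longrightarrow> \<bar>g k\<bar> \<le> B"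
    and "\<And>k. k \<ge> 1 \<Longrightarrow> f k \<le> g k"
  shows "tail_sum r f n \<le> tail_sum r g n"
  unfolding tail_sum_def using assms
  by (intro suminf_le summable_tail_terms[OF assms(1,2,3)] summable_tail_terms[OF assms(1,2,4)]
      mult_right_mono) auto

text \<open>Otherwise the largest \<open>d \<in> V\<close> with \<open>d + A \<le> x\<close> would have a successor in \<open>V\<close>
  that also satisfies this.\<close>
lemma window_covering:
  fixes V :: "real set"
  assumes V: "finite V" "V \<noteq> {}"
    and gaps: "\<And>y z. y \<in> V \<Longrightarrow> z \<in> V \<Longrightarrow> y < z \<Longrightarrow> \<not> (\<exists>w\<in>V. y < w \<and> w < z) \<Longrightarrow> z - y \<le> C - A"
    and x: "Min V + A \<le> x" "x \<le> Max V + C"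
  shows "\<exists>d\<in>V. A \<le> x - d \<and> x - d \<le> C"
proof (rule ccontr)
  assume no_window: "\<not> ?thesis"
  define W where "W = {d\<in>V. d + A \<le> x}"
  have W: "finite W" "W \<noteq> {}"
    using V(1) x(1) Min_in[OF V] unfolding W_def by auto
  define d where "d = Max W"
  have dV: "d \<in> V" "d + A \<le> x" and x_above: "d + C < x"
    using Max_in[OF W] no_window by (force simp: d_def W_def)+
  have "d < Max V"
    using x_above x(2) Max_ge[OF V(1) dV(1)] by fastforce
  define U where "U = {z\<in>V. d < z}"
  have U: "finite U" "U \<noteq> {}"
    using V(1) \<open>d < Max V\<close> Max_in[OF V] unfolding U_def by auto
  define e where "e = Min U"
  have eV: "e \<in> V" "d < e"
    using Min_in[OF U] by (auto simp: e_def U_def)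
  have "\<not> (\<exists>w\<in>V. d < w \<and> w < e)"
    using Min_le[OF U(1)] by (force simp: e_def U_def)
  with gaps[OF dV(1) eV] x_above have "e \<in> W"
    using eV by (simp add: W_def)
  hence "e \<le> d" using Max_ge[OF W(1)] by (simp add: d_def)
  thus False using eV by simp
qed

text \<open>The remainder after \<open>N\<close> greedy steps is \<open>r\<^sup>N\<close> times a point of the bounded interval
  \<open>[l\<^sub>N, u\<^sub>N]\<close>.\<close>
lemma greedy_expansion:
  fixes r K x :: real and l u :: "nat \<Rightarrow> real" and V :: "nat \<Rightarrow> real set"
  assumes r: "0 < r" "r < 1"
    and bdd: "\<And>n. \<bar>l n\<bar> \<le> K" "\<And>n. \<bar>u n\<bar> \<le> K"
    and step: "\<And>n y. l n \<le> y \<Longrightarrow> y \<le> u n \<Longrightarrow>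
                 \<exists>v\<in>V (Suc n). l (Suc n) \<le> y / r - v \<and> y / r - v \<le> u (Suc n)"
    and x: "l 0 \<le> x" "x \<le> u 0"
  shows "\<exists>a. (\<forall>n\<ge>1. a n \<in> V n) \<and> x = tail_sum r a 0"
proof -
  define digit where
    "digit n y = (SOME v. v \<in> V (Suc n) \<and> l (Suc n) \<le> y / r - v \<and> y / r - v \<le> u (Suc n))" for n y
  have digit: "digit n y \<in> V (Suc n)" "l (Suc n) \<le> y / r - digit n y" "y / r - digit n y \<le> u (Suc n)"
    if "l n \<le> y" "y \<le> u n" for n y
    using someI_ex[OF step[OF that, unfolded Bex_def]] unfolding digit_def by auto
  define rem where "rem = rec_nat x (\<lambda>n y. y / r - digit n y)"
  have rem_0: "rem 0 = x" and rem_Suc: "rem (Suc n) = rem n / r - digit n (rem n)" for n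
    by (simp_all add: rem_def)
  have rem_in: "l n \<le> rem n \<and> rem n \<le> u n" for n
    by (induction n) (use x digit in \<open>auto simp: rem_0 rem_Suc\<close>)
  define a where "a k = (case k of 0 \<Rightarrow> 0 | Suc n \<Rightarrow> digit n (rem n))" for k
  have aV: "\<forall>n\<ge>1. a n \<in> V n"
    using digit(1) rem_in by (auto simp: a_def split: nat.split)
  have partial: "x = (\<Sum>k<N. a (Suc k) * r ^ Suc k) + r ^ N * rem N" for N
  proof (induction N)
    case (Suc N)
    have "r ^ N * rem N = a (Suc N) * r ^ Suc N + r ^ Suc N * rem (Suc N)"
      using r by (simp add: rem_Suc a_def algebra_simps)
    thus ?case using Suc by simp
  qed (simp add: rem_0)
  have "(\<lambda>N. r ^ N * rem N) \<longlonglongrightarrow> 0"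
  proof (rule tendsto_0_le[where K = K])
    show "(\<lambda>N. r ^ N) \<longlonglongrightarrow> 0" using r by (intro LIMSEQ_power_zero) auto
    have "\<bar>rem N\<bar> \<le> K" for N using rem_in[of N] bdd[of N] by linarith
    thus "\<forall>\<^sub>F N in sequentially. norm (r ^ N * rem N) \<le> norm (r ^ N) * K"
      using r by (intro always_eventually allI) (simp add: abs_mult mult_left_mono)
  qed
  hence "(\<lambda>N. x - r ^ N * rem N) \<longlonglongrightarrow> x - 0"
    by (intro tendsto_diff tendsto_const)
  moreover have "x - r ^ N * rem N = (\<Sum>k<N. a (Suc k) * r ^ Suc k)" for N
    using partial[of N] by linarith
  ultimately have "(\<lambda>N. \<Sum>k<N. a (Suc k) * r ^ Suc k) \<longlonglongrightarrow> x"
    by simp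
  hence "x = tail_sum r a 0"
    by (simp add: tail_sum_def sums_def sums_unique)
  with aV show ?thesis by blast
qed

lemma tail_sums_eq_interval:
  fixes r B :: real and V :: "nat \<Rightarrow> real set"
  assumes r: "0 < r" "r < 1"
    and fin: "\<And>n. n \<ge> 1 \<Longrightarrow> finite (V n)"
    and ne: "\<And>n. n \<ge> 1 \<Longrightarrow> V n \<noteq> {}"
    and bdd: "\<And>n v. n \<ge> 1 \<Longrightarrow> v \<in> V n \<Longrightarrow> \<bar>v\<bar> \<le> B"
    and gaps: "\<And>n y z. n \<ge> 1 \<Longrightarrow> y \<in> V n \<Longrightarrow> z \<in> V n \<Longrightarrow> y < z \<Longrightarrow>
                 \<not> (\<exists>w\<in>V n. y < w \<and> w < z) \<Longrightarrow> z - y \<le> tail_sum r (\<lambda>k. Max (V k) - Min (V k)) n"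
  shows "{tail_sum r a 0 | a. \<forall>n\<ge>1. a n \<in> V n}
       = {tail_sum r (\<lambda>k. Min (V k)) 0 .. tail_sum r (\<lambda>k. Max (V k)) 0}"
proof -
  define l where "l = tail_sum r (\<lambda>k. Min (V k))"
  define u where "u = tail_sum r (\<lambda>k. Max (V k))"
  have Min_bdd: "\<bar>Min (V k)\<bar> \<le> B" and Max_bdd: "\<bar>Max (V k)\<bar> \<le> B" if "k \<ge> 1" for k
    using bdd[OF that] Min_in[OF fin ne] Max_in[OF fin ne] that by auto
  have step: "\<exists>v\<in>V (Suc n). l (Suc n) \<le> y / r - v \<and> y / r - v \<le> u (Suc n)"
    if y: "l n \<le> y" "y \<le> u n" for n y
  proof (rule window_covering)
    show "finite (V (Suc n))" "V (Suc n) \<noteq> {}" using fin ne by auto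
    have "l n = r * (Min (V (Suc n)) + l (Suc n))" "u n = r * (Max (V (Suc n)) + u (Suc n))"
      unfolding l_def u_def
      by (rule tail_sum_unfold[OF r Min_bdd], assumption, rule tail_sum_unfold[OF r Max_bdd])
    with y r show "Min (V (Suc n)) + l (Suc n) \<le> y / r" "y / r \<le> Max (V (Suc n)) + u (Suc n)"
      by (simp_all add: field_simps)
    have "tail_sum r (\<lambda>k. Max (V k) - Min (V k)) (Suc n) = u (Suc n) - l (Suc n)"
      unfolding l_def u_def using tail_sum_diff[OF r Min_bdd Max_bdd] by simp
    thus "z - w \<le> u (Suc n) - l (Suc n)"
      if "w \<in> V (Suc n)" "z \<in> V (Suc n)" "w < z" "\<not> (\<exists>t\<in>V (Suc n). w < t \<and> t < z)" for w z
      using gaps[OF _ that] by simp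
  qed
  have "x \<in> {l 0 .. u 0}" if "\<forall>n\<ge>1. a n \<in> V n" "x = tail_sum r a 0" for a x
  proof -
    have "\<bar>a k\<bar> \<le> B" "Min (V k) \<le> a k" "a k \<le> Max (V k)" if "k \<ge> 1" for k
      using \<open>\<forall>n\<ge>1. a n \<in> V n\<close> that bdd fin by auto
    thus ?thesis
      unfolding l_def u_def \<open>x = tail_sum r a 0\<close>
      using tail_sum_mono[OF r Min_bdd] tail_sum_mono[OF r _ Max_bdd] by auto
  qed
  moreover have "\<exists>a. (\<forall>n\<ge>1. a n \<in> V n) \<and> x = tail_sum r a 0" if "x \<in> {l 0 .. u 0}" for x
  proof -
    have "\<bar>l n\<bar> \<le> B * r / (1 - r)" "\<bar>u n\<bar> \<le> B * r / (1 - r)" for n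
      unfolding l_def u_def using abs_tail_sum_le[OF r Min_bdd] abs_tail_sum_le[OF r Max_bdd] by auto
    with step that show ?thesis
      by (intro greedy_expansion[where l = l and u = u and V = V, OF r]) auto
  qed
  ultimately show ?thesis
    unfolding l_def[symmetric] u_def[symmetric] by blast
qed

lemma tail_sums_image:
  "{tail_sum r (\<lambda>k. g (a k)) 0 | a. \<forall>n\<ge>1. a n \<in> D n} = {tail_sum r b 0 | b. \<forall>n\<ge>1. b n \<in> g ` D n}"
proof (intro set_eqI iffI)
  fix x assume "x \<in> {tail_sum r b 0 | b. \<forall>n\<ge>1. b n \<in> g ` D n}"
  then obtain b where b: "\<forall>n\<ge>1. b n \<in> g ` D n" and x: "x = tail_sum r b 0" by blast
  define a where "a n = inv_into (D n) g (b n)" for n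
  have "\<forall>n\<ge>1. a n \<in> D n" using b by (simp add: a_def inv_into_into)
  moreover have "tail_sum r (\<lambda>k. g (a k)) 0 = x"
    unfolding x using b by (intro tail_sum_cong) (simp add: a_def f_inv_into_f)
  ultimately show "x \<in> {tail_sum r (\<lambda>k. g (a k)) 0 | a. \<forall>n\<ge>1. a n \<in> D n}" by blast
qed blast

lemma abs_gdigit_val_le:
  assumes "\<beta> \<ge> 1" "length c \<le> L" "\<forall>j\<in>set c. j \<le> M"
  shows "\<bar>gdigit_val \<beta> c\<bar> \<le> real L * real M"
proof -
  have term_le: "0 \<le> real (c ! i) * \<beta> powr (- real i) \<and> real (c ! i) * \<beta> powr (- real i) \<le> real M"
    if "i < length c" for i
  proof -
    have "\<beta> powr (- real i) \<le> 1" using powr_mono[of "- real i" 0 \<beta>] assms(1) by simp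
    moreover have "c ! i \<le> M" using assms(3) nth_mem[OF that] by blast
    ultimately have "real (c ! i) * \<beta> powr (- real i) \<le> real M * 1"
      by (intro mult_mono) auto
    thus ?thesis by simp
  qed
  have "gdigit_val \<beta> c \<le> real (length c) * real M"
    unfolding gdigit_val_def using term_le sum_mono[of "{..<length c}" _ "\<lambda>_. real M"] by simp
  also have "\<dots> \<le> real L * real M" using assms(2) by (intro mult_right_mono) auto
  finally have "gdigit_val \<beta> c \<le> real L * real M" .
  moreover have "0 \<le> gdigit_val \<beta> c"
    unfolding gdigit_val_def using term_le by (intro sum_nonneg) auto
  ultimately show ?thesis by simp
qed

lemma consecutive_gap_le_dgap:
  assumes "finite D" "y \<in> digit_vals \<beta> D" "z \<in> digit_vals \<beta> D" "y < z"
    and "\<not> (\<exists>w\<in>digit_vals \<beta> D. y < w \<and> w < z)"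
  shows "z - y \<le> dgap \<beta> D"
proof -
  let ?V = "digit_vals \<beta> D"
  let ?S = "{z - y | y z. y \<in> ?V \<and> z \<in> ?V \<and> y < z \<and> \<not> (\<exists>w\<in>?V. y < w \<and> w < z)}"
  have "?S \<subseteq> (\<lambda>(y, z). z - y) ` (?V \<times> ?V)" by auto
  moreover have "finite ?V" using assms(1) by (simp add: digit_vals_def)
  ultimately have "finite ?S" by (meson finite_SigmaI finite_imageI finite_subset)
  thus ?thesis unfolding dgap_def using assms(2-5) by (intro Max_ge) blast+
qed

theorem lemma2p2:
  fixes \<beta> :: real and D :: "nat \<Rightarrow> nat list set"
  assumes beta: "\<beta> > 1"
    and fin: "\<And>n. n \<ge> 1 \<Longrightarrow> finite (D n)"
    and ne: "\<And>n. n \<ge> 1 \<Longrightarrow> D n \<noteq> {}"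
    and digits: "\<And>n c. n \<ge> 1 \<Longrightarrow> c \<in> D n \<Longrightarrow> c \<noteq> []"
    and len_bdd: "\<exists>L. \<forall>n\<ge>1. \<forall>c\<in>D n. length c \<le> L"
    and sub_bdd: "\<exists>M. \<forall>n\<ge>1. \<forall>c\<in>D n. \<forall>j\<in>set c. j \<le> M"
    and gap: "\<And>n. n \<ge> 1 \<Longrightarrow>
      dgap \<beta> (D n) \<le> (\<Sum>i. dspread \<beta> (D (n + Suc i)) * \<beta> powr (- real (Suc i)))"
  shows "{(\<Sum>n. gdigit_val \<beta> (a (Suc n)) * \<beta> powr (- real (Suc n))) | a.
            \<forall>n\<ge>1. a n \<in> D n}
       = {(\<Sum>n. dmin \<beta> (D (Suc n)) * \<beta> powr (- real (Suc n))) ..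
          (\<Sum>n. dmax \<beta> (D (Suc n)) * \<beta> powr (- real (Suc n)))}"
proof -
  obtain L M where L: "\<forall>n\<ge>1. \<forall>c\<in>D n. length c \<le> L" and M: "\<forall>n\<ge>1. \<forall>c\<in>D n. \<forall>j\<in>set c. j \<le> M"
    using len_bdd sub_bdd by blast
  define r where "r = 1 / \<beta>"
  define V where "V n = digit_vals \<beta> (D n)" for n
  have r: "0 < r" "r < 1" using beta by (auto simp: r_def)
  have powr_eq: "\<beta> powr (- real k) = r ^ k" for k
    using beta by (simp add: r_def powr_minus powr_realpow power_divide inverse_eq_divide)
  have "{tail_sum r b 0 | b. \<forall>n\<ge>1. b n \<in> V n} = {tail_sum r (\<lambda>k. Min (V k)) 0 .. tail_sum r (\<lambda>k. Max (V k)) 0}"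
  proof (rule tail_sums_eq_interval[OF r])
    show "finite (V n)" "V n \<noteq> {}" if "n \<ge> 1" for n
      using fin[OF that] ne[OF that] by (auto simp: V_def digit_vals_def)
    show "\<bar>v\<bar> \<le> real L * real M" if "n \<ge> 1" "v \<in> V n" for n v
      using that L M beta by (auto simp: V_def digit_vals_def intro: abs_gdigit_val_le)
    show "z - y \<le> tail_sum r (\<lambda>k. Max (V k) - Min (V k)) n"
      if "n \<ge> 1" "y \<in> V n" "z \<in> V n" "y < z" "\<not> (\<exists>w\<in>V n. y < w \<and> w < z)" for n y z
    proof -
      have "z - y \<le> dgap \<beta> (D n)"
        using consecutive_gap_le_dgap[OF fin[OF that(1)]] that(2-5) by (simp add: V_def)
      also have "\<dots> \<le> (\<Sum>i. dspread \<beta> (D (n + Suc i)) * \<beta> powr (- real (Suc i)))"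
        using gap[OF that(1)] .
      also have "\<dots> = tail_sum r (\<lambda>k. Max (V k) - Min (V k)) n"
        by (simp only: tail_sum_def powr_eq dspread_def dmax_def dmin_def V_def)
      finally show ?thesis .
    qed
  qed
  hence "{tail_sum r (\<lambda>k. gdigit_val \<beta> (a k)) 0 | a. \<forall>n\<ge>1. a n \<in> D n}
       = {tail_sum r (\<lambda>k. Min (V k)) 0 .. tail_sum r (\<lambda>k. Max (V k)) 0}"
    unfolding tail_sums_image V_def digit_vals_def .
  thus ?thesis unfolding powr_eq dmin_def dmax_def by (simp only: tail_sum_def add_0 V_def)
qed

end
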